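(* For every $1\le k\le 22$ and every $n\ge3$, the Lie algebra $\mathfrak a_k(n)$ has trivial center.
   Context: Pauli matrices $I,X,Y,Z$; for two-qubit strings $AB$, $A_jB_{j+1}$ denotes the length-$n$ Pauli string with $A$ at position $j$, $B$ at position $j+1$, $I$ elsewhere. For a set $S$ of Pauli strings, $\mathrm{Lie}\langle S\rangle$ is the smallest real Lie subalgebra of $\mathfrak u(2^n)$ containing $\{iP:P\in S\}$. For a set $G$ of two-qubit strings, $G(n)=\mathrm{Lie}\langle A_jB_{j+1}: AB\in G, 1\le j\le n-1\rangle$. Generating sets: $\mathfrak a_1=\{XY\}$, $\mathfrak a_2=\{XY,YX\}$, $\mathfrak a_3=\{XX,YZ\}$, $\mathfrak a_4=\{XX,YY\}$, $\mathfrak a_5=\{XY,YZ\}$, $\mathfrak a_6=\{XX,YZ,ZY\}$, $\mathfrak a_7=\{XX,YY,ZZ\}$, $\mathfrak a_8=\{XX,XZ\}$, $\mathfrak a_9=\{XY,XZ\}$, $\mathfrak a_{10}=\{XY,YZ,ZX\}$, $\mathfrak a_{11}=\{XY,YX,YZ\}$, $\mathfrak a_{12}=\{XX,XY,YZ\}$, $\mathfrak a_{13}=\{XX,YY,YZ\}$, $\mathfrak a_{14}=\{XX,YY,XY\}$, $\mathfrak a_{15}=\{XX,XY,XZ\}$, $\mathfrak a_{16}=\{XY,YX,YZ,ZY\}$, $\mathfrak a_{17}=\{XX,XY,ZX\}$, $\mathfrak a_{18}=\{XX,XZ,YY,ZY\}$, $\mathfrak a_{19}=\{XX,XY,ZX,YZ\}$,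 $\mathfrak a_{20}=\{XX,YY,ZZ,ZY\}$, $\mathfrak a_{21}=\{XX,YY,XY,ZX\}$, $\mathfrak a_{22}=\{XX,XY,XZ,YX\}$. *)

theory Defs
  imports "Jordan_Normal_Form.Matrix"
begin

datatype pauli = PI | PX | PY | PZ

text \<open>Entry (r,c) of the 2x2 Pauli matrix, basis state False = |0>, True = |1>.\<close>
fun pauli_entry :: "pauli \<Rightarrow> bool \<Rightarrow> bool \<Rightarrow> complex" where
  "pauli_entry PI r c = (if r = c then 1 else 0)"
| "pauli_entry PX r c = (if r \<noteq> c then 1 else 0)"
| "pauli_entry PY r c = (if r = c then 0 else if r then \<i> else - \<i>)"
| "pauli_entry PZ r c = (if r = c then (if r then -1 else 1) else 0)"

definition bit_of :: "nat \<Rightarrow> nat \<Rightarrow> bool" where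
  "bit_of x j = odd (x div 2 ^ j)"

text \<open>Tensor product of the Pauli matrices in the word w (qubit j uses bit j of the index).\<close>
definition pauli_mat :: "pauli list \<Rightarrow> complex mat" where
  "pauli_mat w = mat (2 ^ length w) (2 ^ length w)
     (\<lambda>(r, c). \<Prod>j<length w. pauli_entry (w ! j) (bit_of r j) (bit_of c j))"

text \<open>The length-n string A_j B_{j+1} (positions 1-indexed, 1 <= j <= n-1).\<close>
definition two_site :: "nat \<Rightarrow> nat \<Rightarrow> pauli \<Rightarrow> pauli \<Rightarrow> pauli list" where
  "two_site n j A B = replicate (j - 1) PI @ [A, B] @ replicate (n - j - 1) PI"

inductive_set lie_closure :: "nat \<Rightarrow> complex mat set \<Rightarrow> complex mat set"
  for N :: nat and S :: "complex mat set" where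
  gen: "x \<in> S \<Longrightarrow> x \<in> lie_closure N S"
| zero: "0\<^sub>m N N \<in> lie_closure N S"
| add: "x \<in> lie_closure N S \<Longrightarrow> y \<in> lie_closure N S \<Longrightarrow> x + y \<in> lie_closure N S"
| smult: "x \<in> lie_closure N S \<Longrightarrow> complex_of_real r \<cdot>\<^sub>m x \<in> lie_closure N S"
| bracket: "x \<in> lie_closure N S \<Longrightarrow> y \<in> lie_closure N S \<Longrightarrow> x * y - y * x \<in> lie_closure N S"

definition Lie_gen :: "nat \<Rightarrow> pauli list set \<Rightarrow> complex mat set" where
  "Lie_gen n S = lie_closure (2 ^ n) ((\<lambda>P. \<i> \<cdot>\<^sub>m pauli_mat P) ` S)"

definition G_alg :: "(pauli \<times> pauli) set \<Rightarrow> nat \<Rightarrow> complex mat set" where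
  "G_alg G n = Lie_gen n {two_site n j A B | j A B. (A, B) \<in> G \<and> 1 \<le> j \<and> j \<le> n - 1}"

definition lie_center :: "complex mat set \<Rightarrow> complex mat set" where
  "lie_center L = {x \<in> L. \<forall>y \<in> L. x * y - y * x = 0\<^sub>m (dim_row x) (dim_col x)}"

text \<open>a_k = gens k for 1 <= k <= 22 (entry k-1 of the list).\<close>
definition gens_list :: "(pauli \<times> pauli) set list" where
  "gens_list = [
    {(PX,PY)},
    {(PX,PY),(PY,PX)},
    {(PX,PX),(PY,PZ)},
    {(PX,PX),(PY,PY)},
    {(PX,PY),(PY,PZ)},
    {(PX,PX),(PY,PZ),(PZ,PY)},
    {(PX,PX),(PY,PY),(PZ,PZ)},
    {(PX,PX),(PX,PZ)},
    {(PX,PY),(PX,PZ)},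
    {(PX,PY),(PY,PZ),(PZ,PX)},
    {(PX,PY),(PY,PX),(PY,PZ)},
    {(PX,PX),(PX,PY),(PY,PZ)},
    {(PX,PX),(PY,PY),(PY,PZ)},
    {(PX,PX),(PY,PY),(PX,PY)},
    {(PX,PX),(PX,PY),(PX,PZ)},
    {(PX,PY),(PY,PX),(PY,PZ),(PZ,PY)},
    {(PX,PX),(PX,PY),(PZ,PX)},
    {(PX,PX),(PX,PZ),(PY,PY),(PZ,PY)},
    {(PX,PX),(PX,PY),(PZ,PX),(PY,PZ)},
    {(PX,PX),(PY,PY),(PZ,PZ),(PZ,PY)},
    {(PX,PX),(PY,PY),(PX,PY),(PZ,PX)},
    {(PX,PX),(PX,PY),(PX,PZ),(PY,PX)}
  ]"

definition gens :: "nat \<Rightarrow> (pauli \<times> pauli) set" where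
  "gens k = gens_list ! (k - 1)"

end

(* The generated algebra consists of skew-Hermitian matrices, and every generator iP anticommutes
   with some generator iQ, where (iQ)^2 = -1. If z commutes with the whole algebra, then
   iQ z iP iQ = z iP, so cyclicity of the trace gives tr(z iP) = -tr(z iP (iQ)^2) = -tr(z iP):
   z is trace-orthogonal to the generators. Being central, it is also trace-orthogonal to all
   brackets, hence to the whole algebra and in particular to itself; for skew-Hermitian z,
   tr(z z) = - sum |z_ik|^2, so z = 0. In the chains a_k(n), n >= 3, a partner of A_j B_(j+1)
   sits on the same two sites or overlaps them in one site, which for the 22 generating sets
   is a finite check. *)

theory Submission
  imports Defs
begin

section \<open>Traces and skew-Hermitian matrices\<close>

definition trace :: "'a :: comm_ring_1 mat \<Rightarrow> 'a" where
  "trace A = (\<Sum>i<dim_row A. A $$ (i, i))"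

lemma trace_mult_commute:
  fixes A B :: "'a :: comm_ring_1 mat"
  assumes "A \<in> carrier_mat N N" "B \<in> carrier_mat N N"
  shows "trace (A * B) = trace (B * A)"
proof -
  have "trace (A * B) = (\<Sum>i<N. \<Sum>k<N. A $$ (i, k) * B $$ (k, i))"
    using assms by (simp add: trace_def scalar_prod_def atLeast0LessThan)
  also have "\<dots> = (\<Sum>k<N. \<Sum>i<N. B $$ (k, i) * A $$ (i, k))"
    by (subst sum.swap) (simp add: mult.commute)
  also have "\<dots> = trace (B * A)"
    using assms by (simp add: trace_def scalar_prod_def atLeast0LessThan)
  finally show ?thesis .
qed

lemma trace_add: "A \<in> carrier_mat N N \<Longrightarrow> B \<in> carrier_mat N N \<Longrightarrow> trace (A + B) = trace A + trace B"
  by (simp add: trace_def sum.distrib)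

lemma trace_minus: "A \<in> carrier_mat N N \<Longrightarrow> B \<in> carrier_mat N N \<Longrightarrow> trace (A - B) = trace A - trace B"
  by (simp add: trace_def sum_subtractf)

lemma trace_uminus: "A \<in> carrier_mat N N \<Longrightarrow> trace (- A) = - trace A"
  by (simp add: trace_def sum_negf)

lemma trace_smult: "A \<in> carrier_mat N N \<Longrightarrow> trace (c \<cdot>\<^sub>m A) = c * trace A"
  by (simp add: trace_def sum_distrib_left)

lemma trace_mult_anticommuting:
  fixes z x q :: "'a :: {idom, ring_char_0} mat"
  assumes z: "z \<in> carrier_mat N N" and x: "x \<in> carrier_mat N N" and q: "q \<in> carrier_mat N N"
    and square: "q * q = - 1\<^sub>m N" and anti: "x * q = - (q * x)" and comm: "z * q = q * z"
  shows "trace (z * x) = 0"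
proof -
  have zx: "z * x \<in> carrier_mat N N" and qx: "q * x \<in> carrier_mat N N"
    using z x q by auto
  have "q * ((z * x) * q) = (q * z) * (x * q)"
    using assoc_mult_mat[OF q z mult_carrier_mat[OF x q]] assoc_mult_mat[OF z x q] by simp
  also have "\<dots> = - ((z * q) * (q * x))"
    unfolding anti comm using z q qx by (simp add: mult_carrier_mat)
  also have "\<dots> = - (z * ((q * q) * x))"
    using assoc_mult_mat[OF z q qx] assoc_mult_mat[OF q q x] by simp
  also have "\<dots> = z * x"
    unfolding square using z x by simp
  finally have "trace (z * x) = trace (q * ((z * x) * q))" by simp
  also have "\<dots> = trace (((z * x) * q) * q)"
    using zx q by (intro trace_mult_commute[of _ N]) auto
  also have "((z * x) * q) * q = (z * x) * - 1\<^sub>m N"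
    using zx q by (simp add: square)
  also have "\<dots> = - ((z * x) * 1\<^sub>m N)"
    by (rule uminus_mult_right_mat) (use zx in auto)
  also have "\<dots> = - (z * x)"
    using right_mult_one_mat[OF zx] by simp
  finally have "trace (z * x) = - trace (z * x)"
    using zx by (simp add: trace_uminus[of _ N])
  then show ?thesis by simp
qed

lemma trace_mult_commutator:
  fixes z x y :: "'a :: comm_ring_1 mat"
  assumes z: "z \<in> carrier_mat N N" and x: "x \<in> carrier_mat N N" and y: "y \<in> carrier_mat N N"
    and comm: "z * x = x * z"
  shows "trace (z * (x * y - y * x)) = 0"
proof -
  have "trace (z * (y * x)) = trace ((z * y) * x)"
    using z x y by simp
  also have "\<dots> = trace (x * (z * y))"
    using z x y by (intro trace_mult_commute[of _ N]) auto
  also have "\<dots> = trace ((z * x) * y)"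
    unfolding comm using z x y by simp
  also have "\<dots> = trace (z * (x * y))"
    using z x y by simp
  finally have cyclic: "trace (z * (y * x)) = trace (z * (x * y))" .
  have "z * (x * y - y * x) = z * (x * y) - z * (y * x)"
    using z x y by (intro mult_minus_distrib_mat) auto
  then have "trace (z * (x * y - y * x)) = trace (z * (x * y)) - trace (z * (y * x))"
    using z x y by (simp add: trace_minus[of _ N])
  then show ?thesis
    using cyclic by simp
qed

lemma eq_of_minus_eq_zero_mat:
  fixes A B :: "'a :: ab_group_add mat"
  assumes "A \<in> carrier_mat N M" "B \<in> carrier_mat N M" "A - B = 0\<^sub>m N M"
  shows "A = B"
proof (rule eq_matI)
  fix i j assume "i < dim_row B" "j < dim_col B"
  moreover have "dim_row B = N" "dim_col B = M"
    using assms(2) by auto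
  ultimately have "A $$ (i, j) - B $$ (i, j) = (A - B) $$ (i, j)"
    using assms(1) by auto
  also have "\<dots> = 0"
    using assms(3) \<open>i < dim_row B\<close> \<open>j < dim_col B\<close> \<open>dim_row B = N\<close> \<open>dim_col B = M\<close> by simp
  finally show "A $$ (i, j) = B $$ (i, j)"
    by simp
qed (use assms in auto)

definition skew_hermitian :: "nat \<Rightarrow> complex mat \<Rightarrow> bool" where
  "skew_hermitian N x \<longleftrightarrow>
     x \<in> carrier_mat N N \<and> (\<forall>i<N. \<forall>k<N. x $$ (i, k) = - cnj (x $$ (k, i)))"

lemma skew_hermitianI:
  assumes "x \<in> carrier_mat N N" "\<And>i k. i < N \<Longrightarrow> k < N \<Longrightarrow> x $$ (i, k) = - cnj (x $$ (k, i))"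
  shows "skew_hermitian N x"
  using assms unfolding skew_hermitian_def by blast

lemma skew_hermitian_carrier: "skew_hermitian N x \<Longrightarrow> x \<in> carrier_mat N N"
  unfolding skew_hermitian_def by blast

lemma skew_hermitian_entry:
  "skew_hermitian N x \<Longrightarrow> i < N \<Longrightarrow> k < N \<Longrightarrow> x $$ (i, k) = - cnj (x $$ (k, i))"
  unfolding skew_hermitian_def by blast

lemma skew_hermitian_mult_entry:
  assumes x: "skew_hermitian N x" and y: "skew_hermitian N y" and i: "i < N" and k: "k < N"
  shows "(x * y) $$ (i, k) = cnj ((y * x) $$ (k, i))"
proof -
  have carrier: "x \<in> carrier_mat N N" "y \<in> carrier_mat N N"
    using x y by (auto intro: skew_hermitian_carrier)
  then have "(x * y) $$ (i, k) = (\<Sum>l<N. x $$ (i, l) * y $$ (l, k))"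
    using i k by (simp add: scalar_prod_def atLeast0LessThan)
  also have "\<dots> = (\<Sum>l<N. cnj (y $$ (k, l) * x $$ (l, i)))"
  proof (rule sum.cong[OF refl])
    fix l assume "l \<in> {..<N}"
    then have "x $$ (i, l) = - cnj (x $$ (l, i))" "y $$ (l, k) = - cnj (y $$ (k, l))"
      using x y i k by (auto intro: skew_hermitian_entry)
    then show "x $$ (i, l) * y $$ (l, k) = cnj (y $$ (k, l) * x $$ (l, i))"
      by simp
  qed
  also have "\<dots> = cnj ((y * x) $$ (k, i))"
    using carrier i k by (simp add: scalar_prod_def atLeast0LessThan)
  finally show ?thesis .
qed

lemma lie_closure_skew_hermitian:
  assumes "\<forall>x\<in>S. skew_hermitian N x" "x \<in> lie_closure N S"
  shows "skew_hermitian N x"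
  using assms(2)
proof induction
  case (gen x)
  then show ?case using assms(1) by blast
next
  case zero
  show ?case by (rule skew_hermitianI) auto
next
  case (add x y)
  then have carrier: "x \<in> carrier_mat N N" "y \<in> carrier_mat N N"
    by (auto intro: skew_hermitian_carrier)
  show ?case
  proof (rule skew_hermitianI)
    fix i k assume ik: "i < N" "k < N"
    then show "(x + y) $$ (i, k) = - cnj ((x + y) $$ (k, i))"
      using carrier skew_hermitian_entry[OF add.IH(1) ik] skew_hermitian_entry[OF add.IH(2) ik]
      by simp
  qed (use carrier in auto)
next
  case (smult x r)
  then have carrier: "x \<in> carrier_mat N N"
    by (auto intro: skew_hermitian_carrier)
  show ?case
  proof (rule skew_hermitianI)
    fix i k assume ik: "i < N" "k < N"
    then show "(complex_of_real r \<cdot>\<^sub>m x) $$ (i, k) = - cnj ((complex_of_real r \<cdot>\<^sub>m x) $$ (k, i))"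
      using carrier skew_hermitian_entry[OF smult.IH ik] by simp
  qed (use carrier in auto)
next
  case (bracket x y)
  then have carrier: "x \<in> carrier_mat N N" "y \<in> carrier_mat N N"
    by (auto intro: skew_hermitian_carrier)
  show ?case
  proof (rule skew_hermitianI)
    fix i k assume ik: "i < N" "k < N"
    have "(x * y - y * x) $$ (i, k) = (x * y) $$ (i, k) - (y * x) $$ (i, k)"
      using carrier ik by simp
    also have "\<dots> = cnj ((y * x) $$ (k, i)) - cnj ((x * y) $$ (k, i))"
      using skew_hermitian_mult_entry[OF bracket.IH ik] skew_hermitian_mult_entry[OF bracket.IH(2,1) ik]
      by simp
    also have "\<dots> = - cnj ((x * y - y * x) $$ (k, i))"
      using carrier ik by simp
    finally show "(x * y - y * x) $$ (i, k) = - cnj ((x * y - y * x) $$ (k, i))" .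
  qed (use carrier in auto)
qed

lemma skew_hermitian_trace_square_eq_0:
  assumes z: "skew_hermitian N z" and trace: "trace (z * z) = 0"
  shows "z = 0\<^sub>m N N"
proof -
  have carrier: "z \<in> carrier_mat N N"
    using z by (rule skew_hermitian_carrier)
  have "z $$ (i, k) * z $$ (k, i) = - of_real ((cmod (z $$ (i, k)))\<^sup>2)" if "i < N" "k < N" for i k
    using skew_hermitian_entry[OF z that(2,1)] by (simp add: complex_norm_square[symmetric])
  then have "trace (z * z) = - of_real (\<Sum>i<N. \<Sum>k<N. (cmod (z $$ (i, k)))\<^sup>2)"
    using carrier by (simp add: trace_def scalar_prod_def atLeast0LessThan sum_negf)
  then have "complex_of_real (\<Sum>i<N. \<Sum>k<N. (cmod (z $$ (i, k)))\<^sup>2) = 0"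
    using trace by (metis neg_0_equal_iff_equal)
  then have "(\<Sum>i<N. \<Sum>k<N. (cmod (z $$ (i, k)))\<^sup>2) = 0"
    by (simp only: of_real_eq_0_iff)
  then have "z $$ (i, k) = 0" if "i < N" "k < N" for i k
    using that by (simp add: sum_nonneg_eq_0_iff sum_nonneg)
  then show ?thesis
    using carrier by (intro eq_matI) auto
qed

lemma trace_mult_lie_closure_eq_0:
  assumes skew: "\<forall>x\<in>S. skew_hermitian N x"
    and partner: "\<forall>x\<in>S. \<exists>q\<in>S. q * q = - 1\<^sub>m N \<and> x * q = - (q * x)"
    and z: "z \<in> carrier_mat N N" and central: "\<forall>y\<in>lie_closure N S. z * y = y * z"
    and x: "x \<in> lie_closure N S"
  shows "trace (z * x) = 0"
proof -
  have carrier: "y \<in> carrier_mat N N" if "y \<in> lie_closure N S" for y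
    using lie_closure_skew_hermitian[OF skew that] by (rule skew_hermitian_carrier)
  from x show ?thesis
  proof induction
    case (gen x)
    then obtain q where "q \<in> S" "q * q = - 1\<^sub>m N" "x * q = - (q * x)"
      using partner by blast
    then show ?case
      using z carrier central lie_closure.gen gen
      by (intro trace_mult_anticommuting[of z N x q]) auto
  next
    case zero
    show ?case
      using z by (simp add: trace_def)
  next
    case (add x y)
    then have "x \<in> carrier_mat N N" "y \<in> carrier_mat N N"
      using carrier by auto
    moreover from this have "z * (x + y) = z * x + z * y"
      using z by (intro mult_add_distrib_mat) auto
    ultimately show ?case
      using z add.IH by (simp add: trace_add[of _ N])
  next
    case (smult x r)
    then have x: "x \<in> carrier_mat N N"
      using carrier by auto
    then have "z * (complex_of_real r \<cdot>\<^sub>m x) = complex_of_real r \<cdot>\<^sub>m (z * x)"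
      using z by (intro mult_smult_distrib) auto
    moreover have "z * x \<in> carrier_mat N N"
      using z x by auto
    ultimately show ?case
      using smult.IH by (simp add: trace_smult[of _ N])
  next
    case (bracket x y)
    then show ?case
      using z carrier central by (intro trace_mult_commutator[of z N]) auto
  qed
qed

lemma lie_center_lie_closure_eq_zero:
  assumes skew: "\<forall>x\<in>S. skew_hermitian N x"
    and partner: "\<forall>x\<in>S. \<exists>q\<in>S. q * q = - 1\<^sub>m N \<and> x * q = - (q * x)"
  shows "lie_center (lie_closure N S) = {0\<^sub>m N N}"
proof -
  have carrier: "y \<in> carrier_mat N N" if "y \<in> lie_closure N S" for y
    using lie_closure_skew_hermitian[OF skew that] by (rule skew_hermitian_carrier)
  have "z = 0\<^sub>m N N" if "z \<in> lie_center (lie_closure N S)" for z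
  proof -
    have zL: "z \<in> lie_closure N S"
      using that unfolding lie_center_def by blast
    have z: "z \<in> carrier_mat N N"
      using carrier[OF zL] .
    have central: "z * y = y * z" if y: "y \<in> lie_closure N S" for y
    proof (rule eq_of_minus_eq_zero_mat)
      show "z * y \<in> carrier_mat N N" "y * z \<in> carrier_mat N N"
        using z carrier[OF y] by auto
      have "z * y - y * z = 0\<^sub>m (dim_row z) (dim_col z)"
        using \<open>z \<in> lie_center (lie_closure N S)\<close> y unfolding lie_center_def by blast
      then show "z * y - y * z = 0\<^sub>m N N"
        using z by simp
    qed
    have "trace (z * z) = 0"
      using trace_mult_lie_closure_eq_0[OF skew partner z] central zL by blast
    then show ?thesis
      using skew_hermitian_trace_square_eq_0 lie_closure_skew_hermitian[OF skew zL] by blast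
  qed
  moreover have "0\<^sub>m N N \<in> lie_center (lie_closure N S)"
  proof -
    have "0\<^sub>m N N * y - y * 0\<^sub>m N N = 0\<^sub>m N N" if "y \<in> lie_closure N S" for y
      using carrier[OF that] by simp
    then show ?thesis
      using lie_closure.zero unfolding lie_center_def by auto
  qed
  ultimately show ?thesis
    by blast
qed

section \<open>Pauli strings\<close>

text \<open>On single qubits, sigma_a sigma_b = pauli_phase a b * sigma_(pauli_mult a b), and
  sigma_a sigma_b = pauli_comm_sign a b * sigma_b sigma_a.\<close>

fun pauli_mult :: "pauli \<Rightarrow> pauli \<Rightarrow> pauli" where
  "pauli_mult PI b = b"
| "pauli_mult PX PI = PX" | "pauli_mult PX PX = PI" | "pauli_mult PX PY = PZ" | "pauli_mult PX PZ = PY"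
| "pauli_mult PY PI = PY" | "pauli_mult PY PX = PZ" | "pauli_mult PY PY = PI" | "pauli_mult PY PZ = PX"
| "pauli_mult PZ PI = PZ" | "pauli_mult PZ PX = PY" | "pauli_mult PZ PY = PX" | "pauli_mult PZ PZ = PI"

fun pauli_phase :: "pauli \<Rightarrow> pauli \<Rightarrow> complex" where
  "pauli_phase PX PY = \<i>" | "pauli_phase PY PX = - \<i>"
| "pauli_phase PY PZ = \<i>" | "pauli_phase PZ PY = - \<i>"
| "pauli_phase PZ PX = \<i>" | "pauli_phase PX PZ = - \<i>"
| "pauli_phase _ _ = 1"

definition pauli_comm_sign :: "pauli \<Rightarrow> pauli \<Rightarrow> complex" where
  "pauli_comm_sign a b = (if a \<noteq> PI \<and> b \<noteq> PI \<and> a \<noteq> b then -1 else 1)"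

lemma pauli_entry_mult:
  "pauli_entry a r False * pauli_entry b False c + pauli_entry a r True * pauli_entry b True c
     = pauli_phase a b * pauli_entry (pauli_mult a b) r c"
  by (cases a; cases b; cases r; cases c) simp_all

lemma pauli_phase_swap: "pauli_phase a b = pauli_comm_sign a b * pauli_phase b a"
  by (cases a; cases b) (simp_all add: pauli_comm_sign_def)

lemma pauli_mult_commute: "pauli_mult a b = pauli_mult b a"
  by (cases a; cases b) simp_all

lemma pauli_mult_self [simp]: "pauli_mult a a = PI"
  by (cases a) simp_all

lemma pauli_phase_self [simp]: "pauli_phase a a = 1"
  by (cases a) simp_all

lemma pauli_comm_sign_commute: "pauli_comm_sign a b = pauli_comm_sign b a"
  by (auto simp: pauli_comm_sign_def)

lemma pauli_comm_sign_PI [simp]: "pauli_comm_sign PI b = 1" "pauli_comm_sign a PI = 1"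
  by (simp_all add: pauli_comm_sign_def)

lemma pauli_entry_cnj: "cnj (pauli_entry p c r) = pauli_entry p r c"
  by (cases p; cases r; cases c) simp_all

lemma bit_of_ge:
  assumes "k < 2 ^ m" "m \<le> j"
  shows "\<not> bit_of k j"
proof -
  have "k < 2 ^ j"
    using assms power_increasing[of m j "2::nat"] by linarith
  then show ?thesis
    by (simp add: bit_of_def)
qed

lemma bit_of_add_pow: "k < 2 ^ m \<Longrightarrow> bit_of (k + 2 ^ m) m"
  by (simp add: bit_of_def)

lemma bit_of_add_pow_below:
  assumes "k < 2 ^ m" "j < m"
  shows "bit_of (k + 2 ^ m) j = bit_of k j"
proof -
  have "(2::nat) ^ m = 2 ^ j * 2 ^ (m - j)"
    using assms(2) by (simp flip: power_add)
  then have "(k + 2 ^ m) div 2 ^ j = k div 2 ^ j + 2 ^ (m - j)"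
    by simp
  moreover have "even ((2::nat) ^ (m - j))"
    using assms(2) by simp
  ultimately show ?thesis
    by (simp add: bit_of_def)
qed

lemma bit_of_eqI:
  assumes "r < 2 ^ m" "c < 2 ^ m" "\<forall>j<m. bit_of r j = bit_of c j"
  shows "r = c"
proof -
  have "bit r j = bit c j" for j
    using assms bit_of_ge[of r m j] bit_of_ge[of c m j]
    by (cases "j < m") (auto simp: bit_of_def bit_nat_def)
  then show ?thesis
    by (simp add: bit_eq_iff)
qed

text \<open>Expanding a product of sums: the bits of k choose one summand from each factor.\<close>
lemma sum_prod_bit_of:
  "(\<Sum>k<2 ^ m. \<Prod>j<m. f j (bit_of k j)) = (\<Prod>j<m. f j False + f j True :: 'a :: comm_semiring_1)"
proof (induction m)
  case 0
  then show ?case by simp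
next
  case (Suc m)
  have split: "(\<Sum>k<2 ^ Suc m. g k) = (\<Sum>k<2 ^ m. g k) + (\<Sum>k<2 ^ m. g (k + 2 ^ m))"
    for g :: "nat \<Rightarrow> 'a"
  proof -
    have halves: "{..<2 ^ Suc m} = {..<(2::nat) ^ m} \<union> {2 ^ m..<2 ^ m + 2 ^ m}"
      by auto
    have "(\<Sum>k<2 ^ Suc m. g k) = (\<Sum>k<2 ^ m. g k) + (\<Sum>k\<in>{2 ^ m..<2 ^ m + 2 ^ m}. g k)"
      unfolding halves by (rule sum.union_disjoint) auto
    also have "(\<Sum>k\<in>{2 ^ m..<2 ^ m + 2 ^ m}. g k) = (\<Sum>k<2 ^ m. g (k + 2 ^ m))"
      by (metis add.commute add_0 atLeast0LessThan sum.shift_bounds_nat_ivl)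
    finally show ?thesis .
  qed
  have low: "(\<Sum>k<2 ^ m. \<Prod>j<Suc m. f j (bit_of k j))
      = (\<Sum>k<2 ^ m. \<Prod>j<m. f j (bit_of k j)) * f m False"
    unfolding sum_distrib_right by (intro sum.cong) (simp_all add: bit_of_ge)
  have "(\<Prod>j<Suc m. f j (bit_of (k + 2 ^ m) j)) = (\<Prod>j<m. f j (bit_of k j)) * f m True"
    if "k < 2 ^ m" for k
  proof -
    have "(\<Prod>j<m. f j (bit_of (k + 2 ^ m) j)) = (\<Prod>j<m. f j (bit_of k j))"
      using that by (intro prod.cong) (simp_all add: bit_of_add_pow_below)
    then show ?thesis
      using that by (simp add: bit_of_add_pow)
  qed
  then have high: "(\<Sum>k<2 ^ m. \<Prod>j<Suc m. f j (bit_of (k + 2 ^ m) j))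
      = (\<Sum>k<2 ^ m. \<Prod>j<m. f j (bit_of k j)) * f m True"
    unfolding sum_distrib_right by (intro sum.cong) simp_all
  show ?case
    unfolding split low high Suc by (simp add: distrib_left)
qed

lemma pauli_mat_carrier: "pauli_mat w \<in> carrier_mat (2 ^ length w) (2 ^ length w)"
  by (simp add: pauli_mat_def)

lemma index_pauli_mat:
  "r < 2 ^ length w \<Longrightarrow> c < 2 ^ length w \<Longrightarrow>
     pauli_mat w $$ (r, c) = (\<Prod>j<length w. pauli_entry (w ! j) (bit_of r j) (bit_of c j))"
  by (simp add: pauli_mat_def)

lemma pauli_mat_mult:
  assumes len: "length v = length w"
  shows "pauli_mat w * pauli_mat v
    = (\<Prod>j<length w. pauli_phase (w ! j) (v ! j)) \<cdot>\<^sub>m pauli_mat (map2 pauli_mult w v)"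
proof (rule eq_matI)
  let ?m = "length w"
  have len_map2: "length (map2 pauli_mult w v) = ?m"
    using len by simp
  fix r c
  assume "r < dim_row ((\<Prod>j<?m. pauli_phase (w ! j) (v ! j)) \<cdot>\<^sub>m pauli_mat (map2 pauli_mult w v))"
    and "c < dim_col ((\<Prod>j<?m. pauli_phase (w ! j) (v ! j)) \<cdot>\<^sub>m pauli_mat (map2 pauli_mult w v))"
  then have r: "r < 2 ^ ?m" and c: "c < 2 ^ ?m"
    using len_map2 by (auto simp: pauli_mat_def)
  have "(pauli_mat w * pauli_mat v) $$ (r, c) = (\<Sum>k<2 ^ ?m. pauli_mat w $$ (r, k) * pauli_mat v $$ (k, c))"
    using r c len by (simp add: pauli_mat_def scalar_prod_def atLeast0LessThan)
  also have "\<dots> = (\<Sum>k<2 ^ ?m. \<Prod>j<?m.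
      pauli_entry (w ! j) (bit_of r j) (bit_of k j) * pauli_entry (v ! j) (bit_of k j) (bit_of c j))"
    using r c len by (simp add: index_pauli_mat prod.distrib)
  also have "\<dots> = (\<Prod>j<?m.
      pauli_entry (w ! j) (bit_of r j) False * pauli_entry (v ! j) False (bit_of c j)
      + pauli_entry (w ! j) (bit_of r j) True * pauli_entry (v ! j) True (bit_of c j))"
    by (rule sum_prod_bit_of)
  also have "\<dots> = (\<Prod>j<?m. pauli_phase (w ! j) (v ! j)
      * pauli_entry (pauli_mult (w ! j) (v ! j)) (bit_of r j) (bit_of c j))"
    by (simp add: pauli_entry_mult)
  also have "\<dots> = (\<Prod>j<?m. pauli_phase (w ! j) (v ! j)) * pauli_mat (map2 pauli_mult w v) $$ (r, c)"
    using r c len_map2 len by (simp add: index_pauli_mat prod.distrib)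
  finally show "(pauli_mat w * pauli_mat v) $$ (r, c)
      = ((\<Prod>j<?m. pauli_phase (w ! j) (v ! j)) \<cdot>\<^sub>m pauli_mat (map2 pauli_mult w v)) $$ (r, c)"
    using r c len_map2 by (simp add: pauli_mat_def)
qed (use len in \<open>simp_all add: pauli_mat_def\<close>)

lemma pauli_mat_replicate_PI: "pauli_mat (replicate m PI) = 1\<^sub>m (2 ^ m)"
proof (rule eq_matI)
  fix r c assume "r < dim_row (1\<^sub>m (2 ^ m))" "c < dim_col (1\<^sub>m (2 ^ m))"
  then have r: "r < 2 ^ m" and c: "c < 2 ^ m"
    by auto
  have "pauli_mat (replicate m PI) $$ (r, c) = (\<Prod>j<m. if bit_of r j = bit_of c j then 1 else 0)"
    using r c by (simp add: index_pauli_mat)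
  also have "\<dots> = (if r = c then 1 else 0)"
    using bit_of_eqI[OF r c] by auto
  finally show "pauli_mat (replicate m PI) $$ (r, c) = 1\<^sub>m (2 ^ m) $$ (r, c)"
    using r c by simp
qed (simp_all add: pauli_mat_def)

lemma pauli_mat_square: "pauli_mat w * pauli_mat w = 1\<^sub>m (2 ^ length w)"
proof -
  have "map2 pauli_mult w w = replicate (length w) PI"
    by (auto intro: nth_equalityI)
  then show ?thesis
    by (simp add: pauli_mat_mult pauli_mat_replicate_PI) (rule eq_matI, auto)
qed

definition pauli_anticommute :: "pauli list \<Rightarrow> pauli list \<Rightarrow> bool" where
  "pauli_anticommute w v \<longleftrightarrow>
     length v = length w \<and> (\<Prod>j<length w. pauli_comm_sign (w ! j) (v ! j)) = -1"

lemma pauli_anticommute_sym: "pauli_anticommute w v \<Longrightarrow> pauli_anticommute v w"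
  by (simp add: pauli_anticommute_def pauli_comm_sign_commute)

lemma pauli_mat_anticommute:
  assumes "pauli_anticommute w v"
  shows "pauli_mat w * pauli_mat v = - (pauli_mat v * pauli_mat w)"
proof -
  have len: "length v = length w" and sign: "(\<Prod>j<length w. pauli_comm_sign (w ! j) (v ! j)) = -1"
    using assms by (auto simp: pauli_anticommute_def)
  have "map2 pauli_mult w v = map2 pauli_mult v w"
    using len by (auto intro!: nth_equalityI simp: pauli_mult_commute)
  moreover have "(\<Prod>j<length w. pauli_phase (w ! j) (v ! j)) = - (\<Prod>j<length w. pauli_phase (v ! j) (w ! j))"
    by (subst pauli_phase_swap) (simp add: prod.distrib sign)
  ultimately show ?thesis
    unfolding pauli_mat_mult[OF len] pauli_mat_mult[OF len[symmetric]] len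
    by (intro eq_matI) auto
qed

lemma smult_mult_smult_mat:
  "A \<in> carrier_mat N N \<Longrightarrow> B \<in> carrier_mat N N \<Longrightarrow> (c \<cdot>\<^sub>m A) * (d \<cdot>\<^sub>m B) = (c * d :: 'a :: comm_ring_1) \<cdot>\<^sub>m (A * B)"
  by (rule eq_matI) (auto simp: scalar_prod_def sum_distrib_left ac_simps)

lemma i_pauli_skew_hermitian: "skew_hermitian (2 ^ length w) (\<i> \<cdot>\<^sub>m pauli_mat w)"
proof (rule skew_hermitianI)
  fix r c :: nat assume "r < 2 ^ length w" "c < 2 ^ length w"
  then show "(\<i> \<cdot>\<^sub>m pauli_mat w) $$ (r, c) = - cnj ((\<i> \<cdot>\<^sub>m pauli_mat w) $$ (c, r))"
    using pauli_mat_carrier[of w] by (simp add: index_pauli_mat pauli_entry_cnj)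
qed (simp add: pauli_mat_carrier)

lemma i_pauli_square: "(\<i> \<cdot>\<^sub>m pauli_mat w) * (\<i> \<cdot>\<^sub>m pauli_mat w) = - 1\<^sub>m (2 ^ length w)"
  by (simp add: smult_mult_smult_mat[OF pauli_mat_carrier pauli_mat_carrier] pauli_mat_square)
    (rule eq_matI, auto)

lemma i_pauli_anticommute:
  assumes "pauli_anticommute w v"
  shows "(\<i> \<cdot>\<^sub>m pauli_mat w) * (\<i> \<cdot>\<^sub>m pauli_mat v) = - ((\<i> \<cdot>\<^sub>m pauli_mat v) * (\<i> \<cdot>\<^sub>m pauli_mat w))"
proof -
  have "length v = length w"
    using assms by (simp add: pauli_anticommute_def)
  then have carrier: "pauli_mat w \<in> carrier_mat (2 ^ length w) (2 ^ length w)"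
    "pauli_mat v \<in> carrier_mat (2 ^ length w) (2 ^ length w)"
    using pauli_mat_carrier by metis+
  show ?thesis
    unfolding smult_mult_smult_mat[OF carrier] smult_mult_smult_mat[OF carrier(2,1)]
      pauli_mat_anticommute[OF assms]
    by (rule eq_matI) auto
qed

lemma lie_center_Lie_gen_eq_zero:
  assumes "\<forall>w\<in>T. length w = n" and "\<forall>w\<in>T. \<exists>v\<in>T. pauli_anticommute w v"
  shows "lie_center (Lie_gen n T) = {0\<^sub>m (2 ^ n) (2 ^ n)}"
  unfolding Lie_gen_def
proof (rule lie_center_lie_closure_eq_zero)
  show "\<forall>x\<in>(\<lambda>P. \<i> \<cdot>\<^sub>m pauli_mat P) ` T. skew_hermitian (2 ^ n) x"
    using assms(1) i_pauli_skew_hermitian by fastforce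
  show "\<forall>x\<in>(\<lambda>P. \<i> \<cdot>\<^sub>m pauli_mat P) ` T. \<exists>q\<in>(\<lambda>P. \<i> \<cdot>\<^sub>m pauli_mat P) ` T.
      q * q = - 1\<^sub>m (2 ^ n) \<and> x * q = - (q * x)"
  proof
    fix x assume "x \<in> (\<lambda>P. \<i> \<cdot>\<^sub>m pauli_mat P) ` T"
    then obtain w where w: "w \<in> T" and x: "x = \<i> \<cdot>\<^sub>m pauli_mat w"
      by blast
    then obtain v where v: "v \<in> T" and anti: "pauli_anticommute w v"
      using assms(2) by blast
    then show "\<exists>q\<in>(\<lambda>P. \<i> \<cdot>\<^sub>m pauli_mat P) ` T. q * q = - 1\<^sub>m (2 ^ n) \<and> x * q = - (q * x)"
      using assms(1) i_pauli_square[of v] i_pauli_anticommute[OF anti] unfolding x by force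
  qed
qed

section \<open>Nearest-neighbour chains\<close>

lemma length_two_site: "1 \<le> j \<Longrightarrow> j < n \<Longrightarrow> length (two_site n j A B) = n"
  by (simp add: two_site_def)

lemma nth_two_site:
  assumes "1 \<le> j" "j < n" "i < n"
  shows "two_site n j A B ! i = (if i + 1 = j then A else if i = j then B else PI)"
  using assms unfolding two_site_def
  by (auto simp: nth_append nth_Cons' split: if_splits)

lemma pauli_anticommute_two_site_same:
  assumes "1 \<le> j" "j < n" "pauli_comm_sign A C * pauli_comm_sign B D = -1"
  shows "pauli_anticommute (two_site n j A B) (two_site n j C D)"
proof -
  have "(\<Prod>i<n. pauli_comm_sign (two_site n j A B ! i) (two_site n j C D ! i))
      = (\<Prod>i<n. (if i = j - 1 then pauli_comm_sign A C else 1) * (if i = j then pauli_comm_sign B D else 1))"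
    using assms by (intro prod.cong refl) (auto simp: nth_two_site)
  also have "\<dots> = -1"
    using assms less_imp_diff_less[of j n 1] by (simp add: prod.distrib prod.delta[of "{..<n}"])
  finally show ?thesis
    using assms by (simp add: pauli_anticommute_def length_two_site)
qed

lemma pauli_anticommute_two_site_shift:
  assumes "1 \<le> j" "j + 1 < n" "pauli_comm_sign B C = -1"
  shows "pauli_anticommute (two_site n j A B) (two_site n (j + 1) C D)"
proof -
  have "(\<Prod>i<n. pauli_comm_sign (two_site n j A B ! i) (two_site n (j + 1) C D ! i))
      = (\<Prod>i<n. if i = j then pauli_comm_sign B C else 1)"
    using assms by (intro prod.cong refl) (auto simp: nth_two_site)
  also have "\<dots> = -1"
    using assms by (simp add: prod.delta[of "{..<n}"])
  finally show ?thesis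
    using assms by (simp add: pauli_anticommute_def length_two_site)
qed

text \<open>A generator AB is matched by a generator CD anticommuting with it on the same two sites,
  or by generators overlapping it on either side; the latter needs both directions since
  only one neighbouring pair exists at the ends of the chain.\<close>
definition has_anticommuting_partners :: "(pauli \<times> pauli) set \<Rightarrow> bool" where
  "has_anticommuting_partners G \<longleftrightarrow> (\<forall>(A, B)\<in>G.
     (\<exists>(C, D)\<in>G. pauli_comm_sign A C * pauli_comm_sign B D = -1) \<or>
     ((\<exists>(C, D)\<in>G. pauli_comm_sign B C = -1) \<and> (\<exists>(C, D)\<in>G. pauli_comm_sign A D = -1)))"

lemma has_anticommuting_partners_gens: "1 \<le> k \<Longrightarrow> k \<le> 22 \<Longrightarrow> has_anticommuting_partners (gens k)"
proof -
  have "list_all has_anticommuting_partners gens_list"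
    by (simp add: gens_list_def has_anticommuting_partners_def pauli_comm_sign_def)
  moreover assume "1 \<le> k" "k \<le> 22"
  ultimately show ?thesis
    unfolding gens_def list_all_length by (simp add: gens_list_def)
qed

definition chain_strings :: "(pauli \<times> pauli) set \<Rightarrow> nat \<Rightarrow> pauli list set" where
  "chain_strings G n = {two_site n j A B | j A B. (A, B) \<in> G \<and> 1 \<le> j \<and> j \<le> n - 1}"

lemma length_chain_strings: "w \<in> chain_strings G n \<Longrightarrow> length w = n"
  by (auto simp: chain_strings_def length_two_site)

lemma chain_strings_anticommuting_partner:
  assumes G: "has_anticommuting_partners G" and n: "3 \<le> n" and w: "w \<in> chain_strings G n"
  shows "\<exists>v\<in>chain_strings G n. pauli_anticommute w v"
proof -
  obtain j A B where AB: "(A, B) \<in> G" and j: "1 \<le> j" "j \<le> n - 1" and w: "w = two_site n j A B"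
    using w unfolding chain_strings_def by blast
  have partner: "pauli_anticommute (two_site n j A B) (two_site n j' C D) \<Longrightarrow> (C, D) \<in> G
      \<Longrightarrow> 1 \<le> j' \<Longrightarrow> j' \<le> n - 1 \<Longrightarrow> ?thesis" for j' C D
    unfolding chain_strings_def w by blast
  show ?thesis
  proof (cases "\<exists>(C, D)\<in>G. pauli_comm_sign A C * pauli_comm_sign B D = -1")
    case True
    then obtain C D where "(C, D) \<in> G" "pauli_comm_sign A C * pauli_comm_sign B D = -1"
      by blast
    then show ?thesis
      using j n by (intro partner[of j C D] pauli_anticommute_two_site_same) auto
  next
    case False
    with G AB have right: "\<exists>(C, D)\<in>G. pauli_comm_sign B C = -1"
      and left: "\<exists>(C, D)\<in>G. pauli_comm_sign A D = -1"
      unfolding has_anticommuting_partners_def by blast+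
    show ?thesis
    proof (cases "j + 1 < n")
      case True
      obtain C D where "(C, D) \<in> G" "pauli_comm_sign B C = -1"
        using right by blast
      then show ?thesis
        using j True by (intro partner[of "j + 1" C D] pauli_anticommute_two_site_shift) auto
    next
      case False
      obtain C D where CD: "(C, D) \<in> G" "pauli_comm_sign A D = -1"
        using left by blast
      have j_pred: "j - 1 + 1 = j" "1 \<le> j - 1"
        using False j n by auto
      have "pauli_comm_sign D A = -1"
        using CD(2) by (simp add: pauli_comm_sign_commute)
      then have "pauli_anticommute (two_site n (j - 1) C D) (two_site n (j - 1 + 1) A B)"
        using j_pred j by (intro pauli_anticommute_two_site_shift) auto
      then have "pauli_anticommute (two_site n j A B) (two_site n (j - 1) C D)"
        unfolding j_pred(1) by (rule pauli_anticommute_sym)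
      then show ?thesis
        using CD j_pred j by (intro partner[of "j - 1" C D]) auto
    qed
  qed
qed

theorem mainTheorem7:
  fixes k n :: nat
  assumes "1 \<le> k" and "k \<le> 22" and "3 \<le> n"
  shows "lie_center (G_alg (gens k) n) = {0\<^sub>m (2 ^ n) (2 ^ n)}"
proof -
  have "\<forall>w\<in>chain_strings (gens k) n. \<exists>v\<in>chain_strings (gens k) n. pauli_anticommute w v"
    using chain_strings_anticommuting_partner has_anticommuting_partners_gens assms by blast
  then have "lie_center (Lie_gen n (chain_strings (gens k) n)) = {0\<^sub>m (2 ^ n) (2 ^ n)}"
    using length_chain_strings by (intro lie_center_Lie_gen_eq_zero) auto
  then show ?thesis
    by (simp add: G_alg_def chain_strings_def)
qed

end
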